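(* If $F$ is a field of non-zero characteristic $p$, then $\text{Ш}_F(F)$ is not a noetherian ring.
   Context: $\text{Ш}_F(F)=\bigoplus_{n\in\mathbb{N}} F\,\mathbf{1}^{\otimes (n+1)}$ is the shuffle Baxter $F$-algebra on $F$ (free Baxter $F$-algebra on the empty set) of weight $\lambda\in F$, with multiplication determined by $\mathbf{1}^{\otimes (m+1)} \mathbf{1}^{\otimes (n+1)} = \sum_{k=0}^m \binom{m+n-k}{n}\binom{n}{k} \lambda^k \mathbf{1}^{\otimes (m+n+1-k)}$ and Baxter operator $P(\mathbf{1}^{\otimes(n+1)})=\mathbf{1}^{\otimes(n+2)}$. *)

theory Defs
  imports "HOL-Algebra.Ring_Divisibility"
begin

text \<open>Shuffle Baxter algebra on a field F (free Baxter F-algebra on the empty set) of weight lambda.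
  An element is represented by its finitely supported coefficient function c :: nat => F,
  c n being the coefficient of the basis tensor 1^{(n+1)}.\<close>

definition sh_carrier :: "(nat \<Rightarrow> 'a::field) set" where
  "sh_carrier = {c. finite {n. c n \<noteq> 0}}"

text \<open>Bilinear extension of
  1^{(m+1)} 1^{(n+1)} = sum_{k=0..m} C(m+n-k, n) C(n,k) lambda^k 1^{(m+n+1-k)}.
  The coefficient of 1^{(r+1)} in a*b collects the pairs (m,n) and k with m+n-k = r, 0<=k<=m;
  these force m,n <= r and k = m+n-r.\<close>

definition sh_mult :: "'a::field \<Rightarrow> (nat \<Rightarrow> 'a) \<Rightarrow> (nat \<Rightarrow> 'a) \<Rightarrow> (nat \<Rightarrow> 'a)" where
  "sh_mult lam a b = (\<lambda>r. \<Sum>m\<le>r. \<Sum>n\<le>r.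
      if r \<le> m + n \<and> m + n - r \<le> m
      then a m * b n * of_nat ((r choose n) * (n choose (m + n - r))) * lam ^ (m + n - r)
      else 0)"

definition shuffle_baxter_ring :: "'a::field \<Rightarrow> (nat \<Rightarrow> 'a) ring" where
  "shuffle_baxter_ring lam =
     \<lparr> carrier = sh_carrier,
       monoid.mult = sh_mult lam,
       one = (\<lambda>n. if n = 0 then 1 else 0),
       zero = (\<lambda>n. 0),
       add = (\<lambda>a b n. a n + b n) \<rparr>"

end

theory Submission
  imports Defs "HOL-Computational_Algebra.Primes"
begin

text \<open>
  Up to a power of \<open>\<lambda>\<close>, the structure constants of the shuffle product are the numbers
  \<open>N(m,n,r)\<close> with \<open>(x choose m) * (x choose n) = (\<Sum>r. N(m,n,r) * (x choose r))\<close> for all \<open>x\<close>.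
  As the functions \<open>\<lambda>x. x choose r\<close> are linearly independent, associativity of the shuffle
  product is inherited from that of the multiplication of functions on \<open>nat\<close>.

  Suppose the augmentation ideal \<open>{c. c 0 = 0}\<close> were generated by finitely many elements,
  all supported in degrees \<open>1..B\<close>, and put \<open>P = p ^ B > B\<close>. Since \<open>p\<close> divides \<open>P choose m\<close>
  for \<open>0 < m < P\<close>, the coefficient of the basis element \<open>e\<^sub>P\<close> (the tensor power of \<open>P + 1\<close>
  factors \<open>1\<close>) vanishes in every multiple of a generator. The ideal of all elements with this
  property therefore contains the augmentation ideal, yet \<open>e\<^sub>P\<close> lies in the latter and not
  in the former.
\<close>

definition shuffle_coeff :: "nat \<Rightarrow> nat \<Rightarrow> nat \<Rightarrow> nat" where
  "shuffle_coeff m n r =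
     (if r \<le> m + n \<and> m + n - r \<le> m then (r choose n) * (n choose (m + n - r)) else 0)"

lemma shuffle_coeff_nonzeroD:
  "shuffle_coeff m n r \<noteq> 0 \<Longrightarrow> m \<le> r \<and> n \<le> r \<and> r \<le> m + n"
  unfolding shuffle_coeff_def by (auto split: if_splits simp: not_le)

lemma shuffle_coeff_commute: "shuffle_coeff m n r = shuffle_coeff n m r"
proof (cases "r \<le> m + n")
  case False
  then show ?thesis by (simp add: shuffle_coeff_def)
next
  case True
  define k where "k = m + n - r"
  have k_swap: "n + m - r = k"
    using k_def by simp
  show ?thesis
  proof (cases "k \<le> m \<and> k \<le> n")
    case True
    have "(r choose n) * (n choose k) = (r choose k) * ((r - k) choose (n - k))"
      "(r choose m) * (m choose k) = (r choose k) * ((r - k) choose (m - k))"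
      using True by (auto intro!: choose_mult simp: k_def)
    moreover have "(r - k) choose (n - k) = (r - k) choose (m - k)"
      using True \<open>r \<le> m + n\<close> by (subst binomial_symmetric) (auto simp: k_def)
    ultimately show ?thesis
      using True \<open>r \<le> m + n\<close> unfolding shuffle_coeff_def k_def[symmetric] k_swap by simp
  next
    case False
    then show ?thesis
      using \<open>r \<le> m + n\<close> unfolding shuffle_coeff_def k_def[symmetric] k_swap by auto
  qed
qed

lemma shuffle_coeff_altdef:
  "shuffle_coeff m n r = (if m \<le> r \<and> r \<le> m + n then (r choose m) * (m choose (m + n - r)) else 0)"
  by (subst shuffle_coeff_commute) (auto simp: shuffle_coeff_def add.commute)

lemma choose_mult_choose:
  "(x choose m) * (x choose n) = (\<Sum>r\<le>m+n. shuffle_coeff m n r * (x choose r))"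
proof (cases "x < m")
  case True
  have vanish: "shuffle_coeff m n r * (x choose r) = 0" for r
    using shuffle_coeff_nonzeroD[of m n r] True by (cases "shuffle_coeff m n r = 0") auto
  show ?thesis using True by (simp add: vanish)
next
  case False
  then have "m \<le> x" by simp
  then have "x choose n = (\<Sum>j\<le>n. (m choose j) * ((x - m) choose (n - j)))"
    using vandermonde[of m "x - m" n] by simp
  then have "(x choose m) * (x choose n) =
      (\<Sum>j\<le>n. (m choose j) * ((x choose m) * ((x - m) choose (n - j))))"
    by (simp add: sum_distrib_left mult.left_commute)
  also have "\<dots> = (\<Sum>j\<le>n. (m choose j) * ((m + n - j) choose m) * (x choose (m + n - j)))"
  proof (intro sum.cong refl)
    fix j assume "j \<in> {..n}"
    then show "(m choose j) * ((x choose m) * ((x - m) choose (n - j))) =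
        (m choose j) * ((m + n - j) choose m) * (x choose (m + n - j))"
      using choose_mult[of m "m + n - j" x] \<open>m \<le> x\<close>
      by (cases "m + n - j \<le> x") (auto simp: mult_ac binomial_eq_0)
  qed
  also have "\<dots> = (\<Sum>r\<in>{m..m+n}. (m choose (m + n - r)) * (r choose m) * (x choose r))"
    by (rule sum.reindex_bij_witness[where i = "\<lambda>r. m + n - r" and j = "\<lambda>j. m + n - j"]) auto
  also have "\<dots> = (\<Sum>r\<le>m+n. shuffle_coeff m n r * (x choose r))"
    by (rule sum.mono_neutral_cong_left) (auto simp: shuffle_coeff_altdef)
  finally show ?thesis .
qed

lemma sum_shuffle_coeff_upto:
  assumes "m + n \<le> B"
  shows "(\<Sum>r\<le>B. shuffle_coeff m n r * f r) = (\<Sum>r\<le>m+n. shuffle_coeff m n r * f r)"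
  using assms shuffle_coeff_nonzeroD[of m n] by (intro sum.mono_neutral_right) auto

lemma choose_coeffs_unique:
  fixes u v :: "nat \<Rightarrow> nat"
  assumes eq: "\<And>x. (\<Sum>t\<le>B. u t * (x choose t)) = (\<Sum>t\<le>B. v t * (x choose t))"
  shows "s \<le> B \<Longrightarrow> u s = v s"
proof (induction s rule: less_induct)
  case (less s)
  \<comment> \<open>At \<open>x = s\<close> only the terms \<open>t \<le> s\<close> survive, and the one with \<open>t = s\<close> is \<open>u s\<close>.\<close>
  have at_s: "(\<Sum>t\<le>B. w t * (s choose t)) = (\<Sum>t<s. w t * (s choose t)) + w s" for w :: "nat \<Rightarrow> nat"
  proof -
    have "(\<Sum>t\<le>B. w t * (s choose t)) = (\<Sum>t\<le>s. w t * (s choose t))"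
      using less.prems by (intro sum.mono_neutral_right) auto
    then show ?thesis by (simp add: lessThan_Suc_atMost[symmetric])
  qed
  have "(\<Sum>t<s. u t * (s choose t)) = (\<Sum>t<s. v t * (s choose t))"
    using less.IH less.prems by (intro sum.cong) auto
  then show ?case using eq[of s] unfolding at_s by simp
qed

lemma choose_mult_choose_mult_choose:
  assumes "m + n + q \<le> B"
  shows "(x choose m) * (x choose n) * (x choose q) =
    (\<Sum>s\<le>B. (\<Sum>r\<le>m+n. shuffle_coeff m n r * shuffle_coeff r q s) * (x choose s))"
proof -
  have "(x choose m) * (x choose n) * (x choose q) =
      (\<Sum>r\<le>m+n. shuffle_coeff m n r * ((x choose r) * (x choose q)))"
    unfolding choose_mult_choose[of x m n] sum_distrib_right by (simp add: mult.assoc)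
  also have "\<dots> = (\<Sum>r\<le>m+n. shuffle_coeff m n r * (\<Sum>s\<le>B. shuffle_coeff r q s * (x choose s)))"
  proof (intro sum.cong refl)
    fix r assume "r \<in> {..m+n}"
    then have "r + q \<le> B" using assms by simp
    then show "shuffle_coeff m n r * ((x choose r) * (x choose q)) =
        shuffle_coeff m n r * (\<Sum>s\<le>B. shuffle_coeff r q s * (x choose s))"
      by (simp add: choose_mult_choose sum_shuffle_coeff_upto[of r q B])
  qed
  also have "\<dots> = (\<Sum>s\<le>B. (\<Sum>r\<le>m+n. shuffle_coeff m n r * shuffle_coeff r q s) * (x choose s))"
    by (simp add: sum_distrib_left sum_distrib_right mult.assoc) (rule sum.swap)
  finally show ?thesis .
qed

lemma shuffle_coeff_assoc:
  "(\<Sum>r\<le>s. shuffle_coeff m n r * shuffle_coeff r q s) =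
   (\<Sum>r\<le>s. shuffle_coeff n q r * shuffle_coeff m r s)"
proof -
  define B where "B = m + n + q + s"
  define u where "u t = (\<Sum>r\<le>m+n. shuffle_coeff m n r * shuffle_coeff r q t)" for t
  define v where "v t = (\<Sum>r\<le>n+q. shuffle_coeff n q r * shuffle_coeff r m t)" for t
  have "(\<Sum>t\<le>B. u t * (x choose t)) = (\<Sum>t\<le>B. v t * (x choose t))" for x
    using choose_mult_choose_mult_choose[of m n q B x] choose_mult_choose_mult_choose[of n q m B x]
    unfolding u_def v_def B_def by (simp add: mult_ac)
  then have "u s = v s"
    by (rule choose_coeffs_unique) (simp add: B_def)
  moreover have "(\<Sum>r\<le>s. shuffle_coeff m n r * shuffle_coeff r q s) = u s"
    unfolding u_def using shuffle_coeff_nonzeroD[of m n] shuffle_coeff_nonzeroD[of _ q s]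
    by (intro sum.mono_neutral_cong) auto
  moreover have "(\<Sum>r\<le>s. shuffle_coeff n q r * shuffle_coeff m r s) = v s"
    unfolding v_def using shuffle_coeff_nonzeroD[of n q] shuffle_coeff_nonzeroD[of _ m s]
    by (intro sum.mono_neutral_cong) (auto simp: shuffle_coeff_commute[of m])
  ultimately show ?thesis by simp
qed

definition shuffle_wcoeff :: "'a::comm_semiring_1 \<Rightarrow> nat \<Rightarrow> nat \<Rightarrow> nat \<Rightarrow> 'a" where
  "shuffle_wcoeff lam m n r = of_nat (shuffle_coeff m n r) * lam ^ (m + n - r)"

lemma shuffle_wcoeff_nonzeroD:
  "shuffle_wcoeff lam m n r \<noteq> 0 \<Longrightarrow> m \<le> r \<and> n \<le> r \<and> r \<le> m + n"
  using shuffle_coeff_nonzeroD[of m n r]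
  by (cases "shuffle_coeff m n r = 0") (auto simp: shuffle_wcoeff_def)

lemma shuffle_wcoeff_commute: "shuffle_wcoeff lam m n r = shuffle_wcoeff lam n m r"
  by (simp add: shuffle_wcoeff_def shuffle_coeff_commute add.commute)

lemma shuffle_wcoeff_0_left: "shuffle_wcoeff lam 0 n r = of_bool (n = r)"
  by (auto simp: shuffle_wcoeff_def shuffle_coeff_def)

lemma shuffle_wcoeff_mult:
  "shuffle_wcoeff lam m n r * shuffle_wcoeff lam r q s =
     of_nat (shuffle_coeff m n r * shuffle_coeff r q s) * lam ^ (m + n + q - s)"
proof (cases "shuffle_coeff m n r * shuffle_coeff r q s = 0")
  case True
  then show ?thesis by (auto simp: shuffle_wcoeff_def)
next
  case False
  then have "(m + n - r) + (r + q - s) = m + n + q - s"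
    using shuffle_coeff_nonzeroD[of m n r] shuffle_coeff_nonzeroD[of r q s] by auto
  then have pow: "lam ^ (m + n + q - s) = lam ^ (m + n - r) * lam ^ (r + q - s)"
    by (simp flip: power_add)
  show ?thesis
    unfolding shuffle_wcoeff_def of_nat_mult pow by (simp only: mult_ac)
qed

lemma shuffle_wcoeff_assoc:
  "(\<Sum>r\<le>s. shuffle_wcoeff lam m n r * shuffle_wcoeff lam r q s) =
   (\<Sum>r\<le>s. shuffle_wcoeff lam n q r * shuffle_wcoeff lam r m s)"
  unfolding shuffle_wcoeff_mult sum_distrib_right[symmetric] of_nat_sum[symmetric]
  by (simp add: shuffle_coeff_assoc shuffle_coeff_commute[of _ m] add_ac)

lemma sum_rotate3:
  "(\<Sum>i\<in>A. \<Sum>j\<in>B. \<Sum>k\<in>C. f i j k) = (\<Sum>j\<in>B. \<Sum>k\<in>C. \<Sum>i\<in>A. f i j k)"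
  by (subst sum.swap) (rule sum.cong[OF refl], rule sum.swap)

lemma sh_mult_eq_sum:
  "sh_mult lam a b r = (\<Sum>m\<le>r. \<Sum>n\<le>r. a m * b n * shuffle_wcoeff lam m n r)"
  unfolding sh_mult_def shuffle_wcoeff_def shuffle_coeff_def
  by (intro sum.cong refl) (simp add: mult.assoc)

lemma sh_mult_eq_sum_upto:
  assumes "r \<le> B"
  shows "sh_mult lam a b r = (\<Sum>m\<le>B. \<Sum>n\<le>B. a m * b n * shuffle_wcoeff lam m n r)"
  unfolding sh_mult_eq_sum using assms shuffle_wcoeff_nonzeroD[of lam _ _ r]
  by (intro sum.mono_neutral_cong_left) (auto intro!: sum.neutral sum.mono_neutral_cong_left)

lemma sh_mult_commute: "sh_mult lam a b r = sh_mult lam b a r"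
  unfolding sh_mult_eq_sum by (subst sum.swap) (simp add: shuffle_wcoeff_commute[of lam _ _ r] mult_ac)

lemma sh_mult_left_nested:
  "sh_mult lam (sh_mult lam a b) c s =
     (\<Sum>m\<le>s. \<Sum>n\<le>s. \<Sum>q\<le>s. a m * b n * c q *
        (\<Sum>r\<le>s. shuffle_wcoeff lam m n r * shuffle_wcoeff lam r q s))"
proof -
  have "sh_mult lam (sh_mult lam a b) c s =
      (\<Sum>q\<le>s. \<Sum>r\<le>s. sh_mult lam a b r * c q * shuffle_wcoeff lam r q s)"
    unfolding sh_mult_eq_sum[of lam "sh_mult lam a b"] by (rule sum.swap)
  also have "\<dots> = (\<Sum>q\<le>s. \<Sum>r\<le>s. \<Sum>m\<le>s. \<Sum>n\<le>s.
      a m * b n * c q * (shuffle_wcoeff lam m n r * shuffle_wcoeff lam r q s))"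
    by (intro sum.cong refl)
      (simp only: atMost_iff sh_mult_eq_sum_upto[of _ s] sum_distrib_right, simp add: mult_ac)
  also have "\<dots> = (\<Sum>q\<le>s. \<Sum>m\<le>s. \<Sum>n\<le>s. \<Sum>r\<le>s.
      a m * b n * c q * (shuffle_wcoeff lam m n r * shuffle_wcoeff lam r q s))"
    by (rule sum.cong[OF refl], rule sum_rotate3)
  also have "\<dots> = (\<Sum>m\<le>s. \<Sum>n\<le>s. \<Sum>q\<le>s. \<Sum>r\<le>s.
      a m * b n * c q * (shuffle_wcoeff lam m n r * shuffle_wcoeff lam r q s))"
    by (rule sum_rotate3)
  finally show ?thesis by (simp add: sum_distrib_left)
qed

lemma sh_mult_assoc: "sh_mult lam (sh_mult lam a b) c s = sh_mult lam a (sh_mult lam b c) s"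
proof -
  have "sh_mult lam a (sh_mult lam b c) s = sh_mult lam (sh_mult lam b c) a s"
    by (rule sh_mult_commute)
  also have "\<dots> = (\<Sum>n\<le>s. \<Sum>q\<le>s. \<Sum>m\<le>s. b n * c q * a m *
      (\<Sum>r\<le>s. shuffle_wcoeff lam n q r * shuffle_wcoeff lam r m s))"
    by (rule sh_mult_left_nested)
  also have "\<dots> = (\<Sum>m\<le>s. \<Sum>n\<le>s. \<Sum>q\<le>s. b n * c q * a m *
      (\<Sum>r\<le>s. shuffle_wcoeff lam n q r * shuffle_wcoeff lam r m s))"
    by (rule sum_rotate3[symmetric])
  also have "\<dots> = (\<Sum>m\<le>s. \<Sum>n\<le>s. \<Sum>q\<le>s. a m * b n * c q *
      (\<Sum>r\<le>s. shuffle_wcoeff lam m n r * shuffle_wcoeff lam r q s))"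
  proof (intro sum.cong refl)
    fix m n q
    show "b n * c q * a m * (\<Sum>r\<le>s. shuffle_wcoeff lam n q r * shuffle_wcoeff lam r m s) =
        a m * b n * c q * (\<Sum>r\<le>s. shuffle_wcoeff lam m n r * shuffle_wcoeff lam r q s)"
      unfolding shuffle_wcoeff_assoc[of lam m n q s] by (simp only: mult_ac)
  qed
  finally show ?thesis by (simp add: sh_mult_left_nested)
qed

lemma sh_mult_one_left: "sh_mult lam (\<lambda>n. if n = 0 then 1 else 0) a r = a r"
proof -
  have "{..r} \<inter> {n. n = r} = {r}"
    by auto
  then have "(\<Sum>n\<le>r. (if m = 0 then 1 else 0) * a n * shuffle_wcoeff lam m n r) =
      (if m = 0 then a r else 0)" for m
    by (cases "m = 0") (simp_all add: shuffle_wcoeff_0_left)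
  then show ?thesis by (simp add: sh_mult_eq_sum)
qed

lemma sh_mult_add_left: "sh_mult lam (\<lambda>n. a n + b n) c r = sh_mult lam a c r + sh_mult lam b c r"
  unfolding sh_mult_eq_sum by (simp add: distrib_right sum.distrib)

lemma sh_mult_0: "sh_mult lam a b 0 = a 0 * b 0"
  by (simp add: sh_mult_def)

lemma sh_mult_closed:
  assumes "a \<in> sh_carrier" "b \<in> sh_carrier"
  shows "sh_mult lam a b \<in> sh_carrier"
proof -
  obtain A B where A: "\<And>m. a m \<noteq> 0 \<Longrightarrow> m \<le> A" and B: "\<And>n. b n \<noteq> 0 \<Longrightarrow> n \<le> B"
    using assms by (auto simp: sh_carrier_def finite_nat_set_iff_bounded_le)
  have "sh_mult lam a b r = 0" if "A + B < r" for r
    unfolding sh_mult_eq_sum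
  proof (intro sum.neutral ballI)
    fix m n
    show "a m * b n * shuffle_wcoeff lam m n r = 0"
    proof (cases "a m = 0 \<or> b n = 0")
      case False
      then have "m + n < r"
        using A B that by (meson add_mono le_less_trans)
      then have "shuffle_wcoeff lam m n r = 0"
        using shuffle_wcoeff_nonzeroD by fastforce
      then show ?thesis by simp
    qed auto
  qed
  then have "{r. sh_mult lam a b r \<noteq> 0} \<subseteq> {..A + B}"
    by (auto simp: not_less[symmetric])
  then show ?thesis
    unfolding sh_carrier_def by (auto intro: finite_subset)
qed

lemma sh_carrier_one: "(\<lambda>n. if n = 0 then 1 else 0) \<in> sh_carrier"
  by (simp add: sh_carrier_def)

lemma shuffle_baxter_ring_simps [simp]:
  "carrier (shuffle_baxter_ring lam) = sh_carrier"
  "x \<otimes>\<^bsub>shuffle_baxter_ring lam\<^esub> y = sh_mult lam x y"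
  "x \<oplus>\<^bsub>shuffle_baxter_ring lam\<^esub> y = (\<lambda>n. x n + y n)"
  "\<zero>\<^bsub>shuffle_baxter_ring lam\<^esub> = (\<lambda>n. 0)"
  "\<one>\<^bsub>shuffle_baxter_ring lam\<^esub> = (\<lambda>n. if n = 0 then 1 else 0)"
  by (simp_all add: shuffle_baxter_ring_def)

lemma shuffle_baxter_cring: "cring (shuffle_baxter_ring lam)"
proof (rule cringI)
  show "abelian_group (shuffle_baxter_ring lam)"
  proof (rule abelian_groupI)
    fix x y assume "x \<in> carrier (shuffle_baxter_ring lam)" "y \<in> carrier (shuffle_baxter_ring lam)"
    moreover have "{n. x n + y n \<noteq> 0} \<subseteq> {n. x n \<noteq> 0} \<union> {n. y n \<noteq> 0}"
      by auto
    ultimately show "x \<oplus>\<^bsub>shuffle_baxter_ring lam\<^esub> y \<in> carrier (shuffle_baxter_ring lam)"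
      by (auto simp: sh_carrier_def intro: finite_subset)
  next
    fix x assume "x \<in> carrier (shuffle_baxter_ring lam)"
    then show "\<exists>y\<in>carrier (shuffle_baxter_ring lam).
        y \<oplus>\<^bsub>shuffle_baxter_ring lam\<^esub> x = \<zero>\<^bsub>shuffle_baxter_ring lam\<^esub>"
      by (intro bexI[of _ "\<lambda>n. - x n"]) (auto simp: sh_carrier_def)
  qed (auto simp: sh_carrier_def add_ac)
  from sh_carrier_one show "comm_monoid (shuffle_baxter_ring lam)"
    by (intro comm_monoidI)
      (auto simp: sh_mult_closed fun_eq_iff sh_mult_assoc sh_mult_one_left intro: sh_mult_commute)
qed (simp add: fun_eq_iff sh_mult_add_left)

lemma shuffle_baxter_a_inv:
  assumes "x \<in> sh_carrier"
  shows "\<ominus>\<^bsub>shuffle_baxter_ring lam\<^esub> x = (\<lambda>n. - x n)"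
proof -
  interpret cring "shuffle_baxter_ring lam"
    by (rule shuffle_baxter_cring)
  have "(\<lambda>n. - x n) \<in> sh_carrier"
    using assms by (simp add: sh_carrier_def)
  with assms show ?thesis
    by (intro minus_equality) auto
qed

lemma (in cring) ideal_multiples_in_subgroup:
  assumes H: "subgroup H (add_monoid R)"
  shows "ideal {a \<in> carrier R. \<forall>d\<in>carrier R. a \<otimes> d \<in> H} R" (is "ideal ?I R")
proof (rule idealI)
  show "subgroup ?I (add_monoid R)"
  proof (rule add.subgroupI)
    fix a assume "a \<in> ?I"
    then show "\<ominus> a \<in> ?I"
      using subgroup.m_inv_closed[OF H, folded a_inv_def] by (auto simp: l_minus)
  next
    fix a b assume "a \<in> ?I" "b \<in> ?I"
    then show "a \<oplus> b \<in> ?I"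
      using subgroup.m_closed[OF H] by (auto simp: l_distr)
  qed (use subgroup.one_closed[OF H] in auto)
next
  fix a x assume "a \<in> ?I" "x \<in> carrier R"
  then show "x \<otimes> a \<in> ?I" and "a \<otimes> x \<in> ?I"
    by (auto simp: m_assoc m_lcomm[of x a])
qed (rule ring_axioms)

text \<open>The largest ideal on which the coefficient of \<open>e\<^sub>r\<close> vanishes; by \<open>sh_mult_0\<close>,
  \<open>coeff_vanishing_ideal lam 0\<close> is the augmentation ideal \<open>{c. c 0 = 0}\<close>.\<close>

definition coeff_vanishing_ideal :: "'a::field \<Rightarrow> nat \<Rightarrow> (nat \<Rightarrow> 'a) set" where
  "coeff_vanishing_ideal lam r = {c \<in> sh_carrier. \<forall>d\<in>sh_carrier. sh_mult lam c d r = 0}"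

lemma ideal_coeff_vanishing_ideal:
  "ideal (coeff_vanishing_ideal lam r) (shuffle_baxter_ring lam)"
proof -
  interpret cring "shuffle_baxter_ring lam"
    by (rule shuffle_baxter_cring)
  define H where "H = {c \<in> carrier (shuffle_baxter_ring lam). c r = 0}"
  have "subgroup H (add_monoid (shuffle_baxter_ring lam))"
  proof (rule add.subgroupI)
    fix a b assume "a \<in> H" "b \<in> H"
    then show "\<ominus>\<^bsub>shuffle_baxter_ring lam\<^esub> a \<in> H" and "a \<oplus>\<^bsub>shuffle_baxter_ring lam\<^esub> b \<in> H"
      using a_inv_closed[of a] add.m_closed[of a b] by (auto simp: H_def shuffle_baxter_a_inv)
  qed (use zero_closed in \<open>auto simp: H_def\<close>)
  from ideal_multiples_in_subgroup[OF this] show ?thesis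
    by (simp add: H_def coeff_vanishing_ideal_def sh_mult_closed cong: conj_cong)
qed

lemma coeff_vanishing_idealD:
  assumes "c \<in> coeff_vanishing_ideal lam r"
  shows "c r = 0"
proof -
  have "sh_mult lam c (\<lambda>n. if n = 0 then 1 else 0) r = 0"
    using assms sh_carrier_one unfolding coeff_vanishing_ideal_def by blast
  then show ?thesis
    by (simp add: sh_mult_commute[of lam c] sh_mult_one_left)
qed

lemma basis_in_coeff_vanishing_ideal_0:
  "0 < P \<Longrightarrow> (\<lambda>n. of_bool (n = P)) \<in> coeff_vanishing_ideal lam 0"
  by (simp add: coeff_vanishing_ideal_def sh_carrier_def sh_mult_0)

lemma prime_dvd_prime_power_choose:
  fixes p :: nat
  assumes p: "prime p" and m: "0 < m" "m < p ^ k"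
  shows "p dvd (p ^ k choose m)"
proof (rule ccontr)
  assume not_dvd: "\<not> p dvd (p ^ k choose m)"
  obtain j where j: "m = Suc j"
    using m by (cases m) auto
  have "Suc (p ^ k - 1) = p ^ k"
    using p by (simp add: prime_gt_0_nat)
  then have "p ^ k * (p ^ k - 1 choose j) = (p ^ k choose m) * m"
    using Suc_times_binomial_eq[of "p ^ k - 1" j] by (simp add: j)
  then have "p ^ k dvd (p ^ k choose m) * m"
    by (metis dvd_triv_left)
  moreover have "coprime (p ^ k) (p ^ k choose m)"
    using p not_dvd by (simp add: prime_imp_coprime)
  ultimately have "p ^ k dvd m"
    by (simp add: coprime_dvd_mult_right_iff)
  then show False
    using m by (auto dest: dvd_imp_le)
qed

lemma sh_mult_char_power_eq_0:
  fixes lam :: "'a::field"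
  assumes "CHAR('a) \<noteq> 0" "a 0 = 0" "\<And>m. CHAR('a) ^ k \<le> m \<Longrightarrow> a m = 0"
  shows "sh_mult lam a d (CHAR('a) ^ k) = 0"
proof -
  have "prime CHAR('a)"
    using assms(1) by (intro prime_CHAR_semidom) simp
  have vanish: "a m * d n * shuffle_wcoeff lam m n (CHAR('a) ^ k) = 0" for m n
  proof (cases "0 < m \<and> m < CHAR('a) ^ k")
    case True
    then have "CHAR('a) dvd shuffle_coeff m n (CHAR('a) ^ k)"
      using prime_dvd_prime_power_choose[OF \<open>prime CHAR('a)\<close>] by (simp add: shuffle_coeff_altdef)
    then have "(of_nat (shuffle_coeff m n (CHAR('a) ^ k)) :: 'a) = 0"
      by (simp add: of_nat_eq_0_iff_char_dvd)
    then show ?thesis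
      by (simp add: shuffle_wcoeff_def)
  next
    case False
    then show ?thesis
      using assms(2,3) by (auto simp: not_less)
  qed
  show ?thesis
    by (simp add: sh_mult_eq_sum vanish)
qed

lemma finite_subset_of_coeff_vanishing_ideal_0:
  fixes lam :: "'a::field"
  assumes "CHAR('a) \<noteq> 0" "finite A" "A \<subseteq> coeff_vanishing_ideal lam 0"
  shows "\<exists>P>0. A \<subseteq> coeff_vanishing_ideal lam P"
proof -
  have "finite (\<Union>a\<in>A. {n. a n \<noteq> 0})"
    using assms(2,3) by (auto simp: coeff_vanishing_ideal_def sh_carrier_def)
  then obtain B where B: "\<And>a n. a \<in> A \<Longrightarrow> a n \<noteq> 0 \<Longrightarrow> n \<le> B"
    by (auto simp: finite_nat_set_iff_bounded_le)
  have "2 \<le> CHAR('a)"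
    using assms(1) prime_CHAR_semidom prime_ge_2_nat by blast
  then have "B < CHAR('a) ^ B"
    using less_exp[of B] power_mono[of 2 "CHAR('a)" B] by linarith
  have "A \<subseteq> coeff_vanishing_ideal lam (CHAR('a) ^ B)"
  proof
    fix a assume "a \<in> A"
    then have "a \<in> sh_carrier" "a 0 = 0" "\<And>m. CHAR('a) ^ B \<le> m \<Longrightarrow> a m = 0"
      using assms(3) coeff_vanishing_idealD[of a lam 0] B[of a] \<open>B < CHAR('a) ^ B\<close>
      by (auto simp: coeff_vanishing_ideal_def) (meson le_less_trans not_le)
    then show "a \<in> coeff_vanishing_ideal lam (CHAR('a) ^ B)"
      using assms(1) by (auto simp: coeff_vanishing_ideal_def intro: sh_mult_char_power_eq_0)
  qed
  moreover have "0 < CHAR('a) ^ B"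
    using \<open>2 \<le> CHAR('a)\<close> by simp
  ultimately show ?thesis by blast
qed

theorem lemma3p2:
  fixes lam :: "'a::field"
  assumes "CHAR('a) \<noteq> 0"
  shows "ring (shuffle_baxter_ring lam) \<and> \<not> noetherian_ring (shuffle_baxter_ring lam)"
proof
  interpret cring "shuffle_baxter_ring lam"
    by (rule shuffle_baxter_cring)
  show "ring (shuffle_baxter_ring lam)"
    by (rule ring_axioms)
  show "\<not> noetherian_ring (shuffle_baxter_ring lam)"
  proof
    assume "noetherian_ring (shuffle_baxter_ring lam)"
    from noetherian_ring.finetely_gen[OF this ideal_coeff_vanishing_ideal]
    obtain A where "A \<subseteq> carrier (shuffle_baxter_ring lam)" "finite A"
      and gen: "coeff_vanishing_ideal lam 0 = Idl\<^bsub>shuffle_baxter_ring lam\<^esub> A"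
      by blast
    then have "A \<subseteq> coeff_vanishing_ideal lam 0"
      using genideal_self by blast
    then obtain P where "0 < P" and "A \<subseteq> coeff_vanishing_ideal lam P"
      using finite_subset_of_coeff_vanishing_ideal_0 assms \<open>finite A\<close> by blast
    then have "coeff_vanishing_ideal lam 0 \<subseteq> coeff_vanishing_ideal lam P"
      unfolding gen by (intro genideal_minimal ideal_coeff_vanishing_ideal)
    with basis_in_coeff_vanishing_ideal_0[OF \<open>0 < P\<close>]
    have "(\<lambda>n. of_bool (n = P)) \<in> coeff_vanishing_ideal lam P"
      by blast
    then have "(of_bool (P = P) :: 'a) = 0"
      by (rule coeff_vanishing_idealD)
    then show False
      by simp
  qed
qed

end
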